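(* Let $k\ge 2$ be an integer, and for each $i=1,\dots,k$ let $K_i$ be either $\mathbb{R}$ or $\mathbb{T}$. Let $K=\prod_{i=1}^k K_i$ and for $i=1,\dots,k$ let $H_i=\{(x_1,\dots,x_k)\in K: x_i=0\}$. If $G$ is a dense subgroup of $K$ such that $G\cap H_i$ is not dense in $H_i$ for every $i=1,\dots,k$, then $G$ is zero-dimensional.
   Context: $\mathbb{T}=\mathbb{R}/\mathbb{Z}$ is the circle group written additively, with its usual compact topology; $K$ carries the product topology and $G$ the subspace topology. A space is zero-dimensional if it has a base of clopen sets. *)

theory Defs
  imports "HOL-Analysis.Analysis"
begin

text \<open>The circle group T = R/Z, represented by the fundamental domain [0,1),
  with addition modulo 1 and the quotient topology of the map frac : R -> [0,1).\<close>

definition circle_open :: "real set \<Rightarrow> bool" where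
  "circle_open U \<longleftrightarrow> U \<subseteq> {0..<1} \<and> open {x::real. frac x \<in> U}"

lemma istopology_circle_open: "istopology circle_open"
  unfolding istopology_def circle_open_def
proof (intro conjI allI impI)
  fix S T :: "real set"
  assume "S \<subseteq> {0..<1} \<and> open {x. frac x \<in> S}" "T \<subseteq> {0..<1} \<and> open {x. frac x \<in> T}"
  then show "S \<inter> T \<subseteq> {0..<1}" by blast
  have "{x. frac x \<in> S \<inter> T} = {x. frac x \<in> S} \<inter> {x. frac x \<in> T}" by blast
  with \<open>S \<subseteq> {0..<1} \<and> open {x. frac x \<in> S}\<close> \<open>T \<subseteq> {0..<1} \<and> open {x. frac x \<in> T}\<close>
  show "open {x. frac x \<in> S \<inter> T}" by auto
next
  fix K :: "real set set"
  assume K: "\<forall>S\<in>K. S \<subseteq> {0..<1} \<and> open {x. frac x \<in> S}"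
  then show "\<Union>K \<subseteq> {0..<1}" by blast
  have "{x. frac x \<in> \<Union>K} = (\<Union>S\<in>K. {x. frac x \<in> S})" by blast
  with K show "open {x. frac x \<in> \<Union>K}" by auto
qed

definition circle_topology :: "real topology" where
  "circle_topology = topology circle_open"

text \<open>The group K = K_1 x ... x K_k, indexed by a finite type 'n with k = CARD('n);
  the coordinates in S are circle coordinates, the others real-line coordinates.\<close>

definition factor_topology :: "'n set \<Rightarrow> 'n \<Rightarrow> real topology" where
  "factor_topology S i = (if i \<in> S then circle_topology else euclideanreal)"

definition K_topology :: "('n::finite) set \<Rightarrow> ('n \<Rightarrow> real) topology" where
  "K_topology S = product_topology (factor_topology S) UNIV"

definition K_add :: "'n set \<Rightarrow> ('n \<Rightarrow> real) \<Rightarrow> ('n \<Rightarrow> real) \<Rightarrow> ('n \<Rightarrow> real)" where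
  "K_add S x y = (\<lambda>i. if i \<in> S then frac (x i + y i) else x i + y i)"

definition K_neg :: "'n set \<Rightarrow> ('n \<Rightarrow> real) \<Rightarrow> ('n \<Rightarrow> real)" where
  "K_neg S x = (\<lambda>i. if i \<in> S then frac (- x i) else - x i)"

definition K_zero :: "'n \<Rightarrow> real" where
  "K_zero = (\<lambda>i. 0)"

definition K_subgroup :: "('n::finite) set \<Rightarrow> ('n \<Rightarrow> real) set \<Rightarrow> bool" where
  "K_subgroup S G \<longleftrightarrow> G \<subseteq> topspace (K_topology S) \<and> K_zero \<in> G
     \<and> (\<forall>x\<in>G. \<forall>y\<in>G. K_add S x y \<in> G) \<and> (\<forall>x\<in>G. K_neg S x \<in> G)"

definition K_hyperplane :: "('n::finite) set \<Rightarrow> 'n \<Rightarrow> ('n \<Rightarrow> real) set" where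
  "K_hyperplane S i = {x \<in> topspace (K_topology S). x i = 0}"

definition dense_in :: "'a topology \<Rightarrow> 'a set \<Rightarrow> bool" where
  "dense_in X A \<longleftrightarrow> A \<subseteq> topspace X \<and> X closure_of A = topspace X"

definition zero_dimensional :: "'a topology \<Rightarrow> bool" where
  "zero_dimensional X \<longleftrightarrow>
     (\<forall>U x. openin X U \<and> x \<in> U \<longrightarrow> (\<exists>V. openin X V \<and> closedin X V \<and> x \<in> V \<and> V \<subseteq> U))"

end

theory Submission
  imports Defs
begin

text \<open>Each hyperplane H_i contains a point z_i with a neighbourhood in H_i missing G.
  Given x in G and d > 0, density of G provides for every i elements of G whose i-th
  coordinates a_i < x_i < b_i are within d of x_i and whose other coordinates are close to
  x - z_i. An element of G on the face y_i = a_i (or b_i) of the box with sides [a_j, b_j]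
  would differ from the corresponding one by an element of G in H_i near z_i, which is
  impossible. So the closed box meets G only in the open box, whose trace on G is therefore
  clopen; these traces form a neighbourhood base of x in G.\<close>

text \<open>The quotient maps from \<real> onto the factors and onto K: points of K are handled through
  real lifts, on which boxes and cubes are easy to describe.\<close>
definition factor_quot :: "'n set \<Rightarrow> 'n \<Rightarrow> real \<Rightarrow> real" where
  "factor_quot S j t = (if j \<in> S then frac t else t)"

definition K_quot :: "'n set \<Rightarrow> ('n \<Rightarrow> real) \<Rightarrow> ('n \<Rightarrow> real)" where
  "K_quot S v = (\<lambda>j. factor_quot S j (v j))"

lemma openin_circle_topology: "openin circle_topology U \<longleftrightarrow> circle_open U"
  by (simp add: circle_topology_def istopology_circle_open)

lemma topspace_circle_topology: "topspace circle_topology = {0..<1}"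
proof -
  have "circle_open {0..<1}"
    unfolding circle_open_def by (simp add: frac_lt_1)
  then show ?thesis
    unfolding topspace_def openin_circle_topology circle_open_def by auto
qed

lemma topspace_factor_topology:
  "topspace (factor_topology S j) = (if j \<in> S then {0..<1} else UNIV)"
  by (simp add: factor_topology_def topspace_circle_topology)

lemma topspace_K_topology:
  "topspace (K_topology S) = {x. \<forall>j. x j \<in> topspace (factor_topology S j)}"
  by (auto simp: K_topology_def PiE_iff)

lemma factor_quot_in_topspace: "factor_quot S j t \<in> topspace (factor_topology S j)"
  by (simp add: topspace_factor_topology factor_quot_def frac_lt_1)

lemma factor_quot_eq_self: "x \<in> topspace (factor_topology S j) \<Longrightarrow> factor_quot S j x = x"
  by (simp add: topspace_factor_topology factor_quot_def split: if_splits)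

lemma K_quot_in_topspace: "K_quot S v \<in> topspace (K_topology S)"
  by (simp add: topspace_K_topology K_quot_def factor_quot_in_topspace)

lemma K_quot_eq_self: "x \<in> topspace (K_topology S) \<Longrightarrow> K_quot S x = x"
  by (simp add: topspace_K_topology K_quot_def factor_quot_eq_self)

lemma open_vimage_factor_quot:
  "openin (factor_topology S j) U \<Longrightarrow> open (factor_quot S j -` U)"
  by (auto simp: factor_topology_def factor_quot_def openin_circle_topology circle_open_def
      vimage_def split: if_splits)

lemma vimage_frac_image: "frac -` frac ` I = (\<Union>m::int. (\<lambda>y. y + of_int m) ` I)"
proof (intro set_eqI iffI)
  fix x assume "x \<in> frac -` frac ` I"
  then obtain y where "y \<in> I" "frac x = frac y" by auto
  then obtain n where "x = y + of_int n" by (metis frac_eqE)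
  with \<open>y \<in> I\<close> show "x \<in> (\<Union>m::int. (\<lambda>y. y + of_int m) ` I)" by blast
qed auto

lemma openin_factor_quot_interval:
  "openin (factor_topology S j) (factor_quot S j ` {a<..<b})"
proof (cases "j \<in> S")
  case True
  have "open ((\<lambda>y. y + of_int m) ` {a<..<b})" for m :: int
    using open_translation[of "{a<..<b}" "of_int m"] by (simp add: add.commute)
  then have "open (frac -` frac ` {a<..<b})"
    unfolding vimage_frac_image by blast
  then show ?thesis using True
    by (simp add: factor_topology_def factor_quot_def openin_circle_topology circle_open_def
        vimage_def image_subset_iff frac_lt_1)
qed (simp add: factor_topology_def factor_quot_def)

lemma frac_image_atLeastAtMost_compl:
  fixes a b :: real
  assumes "a \<le> b" "b - a < 1"
  shows "{0..<1} - frac ` {a..b} = frac ` {b<..<a+1}"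
proof (intro set_eqI iffI)
  fix y assume y: "y \<in> {0..<1} - frac ` {a..b}"
  define z where "z = y - of_int \<lfloor>y - a\<rfloor>"
  have fz: "frac z = y"
    using y frac_add_of_int_right[of y "- \<lfloor>y - a\<rfloor>"] by (simp add: z_def)
  have z: "a \<le> z" "z < a + 1"
    unfolding z_def by linarith+
  with y fz have "b < z" by (metis DiffD2 atLeastAtMost_iff image_eqI not_le)
  with fz z show "y \<in> frac ` {b<..<a+1}" by force
next
  fix y assume "y \<in> frac ` {b<..<a+1}"
  then obtain z where z: "b < z" "z < a + 1" "y = frac z" by auto
  have "y \<notin> frac ` {a..b}"
  proof
    assume "y \<in> frac ` {a..b}"
    then obtain w where w: "a \<le> w" "w \<le> b" "frac w = frac z" using z by auto
    then obtain n where "z = w + of_int n" by (metis frac_eqE)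
    with w z have "(0::real) < of_int n" "of_int n < (1::real)" by linarith+
    then show False by simp
  qed
  with z show "y \<in> {0..<1} - frac ` {a..b}" by (simp add: frac_lt_1)
qed

lemma closedin_factor_quot_interval:
  assumes "a \<le> b" "b - a < 1"
  shows "closedin (factor_topology S j) (factor_quot S j ` {a..b})"
proof (cases "j \<in> S")
  case True
  have "openin circle_topology ({0..<1} - frac ` {a..b})"
    using openin_factor_quot_interval[of S j b "a+1"] True frac_image_atLeastAtMost_compl[OF assms]
    by (simp add: factor_topology_def factor_quot_def)
  with True show ?thesis
    by (auto simp: factor_topology_def factor_quot_def closedin_def topspace_circle_topology
        frac_lt_1)
qed (simp add: factor_topology_def factor_quot_def)

lemma K_add_K_quot_K_neg: "K_add S (K_quot S t) (K_neg S (K_quot S s)) = K_quot S (t - s)"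
proof
  fix j
  have "frac (frac (t j) + frac (- frac (s j))) = frac (t j - s j)"
    by (metis frac_add_simps diff_conv_add_uminus frac_diff_simp)
  then show "K_add S (K_quot S t) (K_neg S (K_quot S s)) j = K_quot S (t - s) j"
    by (simp add: K_add_def K_neg_def K_quot_def factor_quot_def)
qed

definition K_box :: "('n::finite) set \<Rightarrow> ('n \<Rightarrow> real) \<Rightarrow> ('n \<Rightarrow> real) \<Rightarrow> ('n \<Rightarrow> real) set" where
  "K_box S a b = PiE UNIV (\<lambda>j. factor_quot S j ` {a j<..<b j})"

definition K_cbox :: "('n::finite) set \<Rightarrow> ('n \<Rightarrow> real) \<Rightarrow> ('n \<Rightarrow> real) \<Rightarrow> ('n \<Rightarrow> real) set" where
  "K_cbox S a b = PiE UNIV (\<lambda>j. factor_quot S j ` {a j..b j})"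

lemma PiE_factor_quot_image: "PiE UNIV (\<lambda>j. factor_quot S j ` I j) = K_quot S ` PiE UNIV I"
proof
  show "PiE UNIV (\<lambda>j. factor_quot S j ` I j) \<subseteq> K_quot S ` PiE UNIV I"
  proof
    fix y assume "y \<in> PiE UNIV (\<lambda>j. factor_quot S j ` I j)"
    then have "\<forall>j. \<exists>u \<in> I j. y j = factor_quot S j u" by (force simp: PiE_iff)
    then obtain t where "\<And>j. t j \<in> I j" "\<And>j. y j = factor_quot S j (t j)" by metis
    then show "y \<in> K_quot S ` PiE UNIV I"
      by (intro image_eqI[of _ _ t]) (auto simp: K_quot_def PiE_iff)
  qed
qed (auto simp: K_quot_def PiE_iff)

lemma K_box_eq_image: "K_box S a b = K_quot S ` {t. \<forall>j. a j < t j \<and> t j < b j}"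
  by (simp add: K_box_def PiE_factor_quot_image PiE_UNIV_domain Pi_def)

lemma K_cbox_eq_image: "K_cbox S a b = K_quot S ` {t. \<forall>j. a j \<le> t j \<and> t j \<le> b j}"
  by (simp add: K_cbox_def PiE_factor_quot_image PiE_UNIV_domain Pi_def)

lemma openin_K_box: "openin (K_topology S) (K_box S a b)"
  by (simp add: K_topology_def K_box_def openin_PiE openin_factor_quot_interval)

lemma closedin_K_cbox:
  assumes "\<And>j. a j \<le> b j \<and> b j - a j < 1"
  shows "closedin (K_topology S) (K_cbox S a b)"
  using assms
  by (simp add: K_topology_def K_cbox_def closedin_product_topology closedin_factor_quot_interval)

lemma K_box_subset_K_cbox: "K_box S a b \<subseteq> K_cbox S a b"
  unfolding K_box_eq_image K_cbox_eq_image by (rule image_mono) (blast intro: less_imp_le)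

lemma dense_in_K_box:
  assumes "dense_in (K_topology S) G" "\<And>j. a j < b j"
  shows "\<exists>t. K_quot S t \<in> G \<and> (\<forall>j. a j < t j \<and> t j < b j)"
proof -
  have mid: "K_quot S (\<lambda>j. (a j + b j) / 2) \<in> K_box S a b"
    unfolding K_box_eq_image using assms(2) by (intro imageI) (simp add: field_simps)
  then have "K_quot S (\<lambda>j. (a j + b j) / 2) \<in> K_topology S closure_of G"
    using assms(1) K_quot_in_topspace by (simp add: dense_in_def)
  with mid obtain y where "y \<in> G" "y \<in> K_box S a b"
    using openin_K_box unfolding in_closure_of by blast
  then show ?thesis
    unfolding K_box_eq_image by blast
qed

lemma dense_in_K_topology_near:
  assumes "dense_in (K_topology S) G" "c < d" "\<rho> > 0"
  shows "\<exists>s. K_quot S s \<in> G \<and> c < s i \<and> s i < d \<and> (\<forall>j. j \<noteq> i \<longrightarrow> \<bar>s j - p j\<bar> < \<rho>)"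
proof -
  have lt: "(if j = i then c else p j - \<rho>) < (if j = i then d else p j + \<rho>)" for j
    using assms(2,3) by simp
  obtain s where "K_quot S s \<in> G"
    and s: "\<And>j. (if j = i then c else p j - \<rho>) < s j \<and> s j < (if j = i then d else p j + \<rho>)"
    using dense_in_K_box[where a="\<lambda>j. if j = i then c else p j - \<rho>"
        and b="\<lambda>j. if j = i then d else p j + \<rho>", OF assms(1)] lt by blast
  moreover have "\<bar>s j - p j\<bar> < \<rho>" if "j \<noteq> i" for j
    using s[of j] that by (simp add: abs_less_iff)
  ultimately show ?thesis using s[of i] by auto
qed

lemma openin_K_topology_cube:
  assumes "openin (K_topology S) U" "x \<in> U"
  shows "\<exists>r>0. \<forall>v. (\<forall>j. \<bar>v j - x j\<bar> < r) \<longrightarrow> K_quot S v \<in> U"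
proof -
  obtain N where N: "\<And>j. openin (factor_topology S j) (N j)" "x \<in> PiE UNIV N" "PiE UNIV N \<subseteq> U"
    using assms unfolding K_topology_def openin_product_topology_alt by (metis UNIV_I)
  have "\<exists>e>0. \<forall>t. \<bar>t - x j\<bar> < e \<longrightarrow> factor_quot S j t \<in> N j" for j
  proof -
    have "x j \<in> N j" using N(2) by (simp add: PiE_iff)
    moreover have "x j \<in> topspace (factor_topology S j)"
      using openin_subset[OF N(1)] \<open>x j \<in> N j\<close> by blast
    ultimately have "x j \<in> factor_quot S j -` N j"
      by (simp add: factor_quot_eq_self)
    then show ?thesis using open_vimage_factor_quot[OF N(1)] unfolding open_real by blast
  qed
  then obtain e where e: "\<And>j. e j > 0" "\<And>j t. \<bar>t - x j\<bar> < e j \<Longrightarrow> factor_quot S j t \<in> N j"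
    by metis
  show ?thesis
  proof (intro exI conjI allI impI)
    show "Min (range e) > 0" using e(1) by simp
    fix v assume v: "\<forall>j. \<bar>v j - x j\<bar> < Min (range e)"
    have "Min (range e) \<le> e j" for j by simp
    with v have "\<bar>v j - x j\<bar> < e j" for j by (meson less_le_trans)
    then show "K_quot S v \<in> U" using N(3) e(2) by (auto simp: K_quot_def PiE_iff)
  qed
qed

lemma clopen_in_subtopology_Int:
  assumes "openin X B" "closedin X C" "B \<subseteq> C" "C \<inter> A \<subseteq> B"
  shows "openin (subtopology X A) (B \<inter> A)" "closedin (subtopology X A) (B \<inter> A)"
proof -
  show "openin (subtopology X A) (B \<inter> A)"
    using assms(1) by (auto simp: openin_subtopology)
  have "B \<inter> A = C \<inter> A" using assms(3,4) by blast
  then show "closedin (subtopology X A) (B \<inter> A)"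
    using assms(2) by (auto simp: closedin_subtopology)
qed

definition hyperplane_gap :: "'n set \<Rightarrow> ('n \<Rightarrow> real) set \<Rightarrow> 'n \<Rightarrow> ('n \<Rightarrow> real) \<Rightarrow> real \<Rightarrow> bool" where
  "hyperplane_gap S G i z r \<longleftrightarrow> r > 0 \<and> z i = 0 \<and>
     (\<forall>v. v i = 0 \<and> (\<forall>j. \<bar>v j - z j\<bar> < r) \<longrightarrow> K_quot S v \<notin> G)"

lemma not_dense_hyperplane_gap:
  fixes S :: "('n::finite) set"
  assumes "\<not> dense_in (subtopology (K_topology S) (K_hyperplane S i)) (G \<inter> K_hyperplane S i)"
  shows "\<exists>z r. hyperplane_gap S G i z r"
proof -
  define H where "H = K_hyperplane S i"
  have "H \<subseteq> topspace (K_topology S)" by (auto simp: H_def K_hyperplane_def)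
  with assms obtain z where z: "z \<in> H" "z \<notin> K_topology S closure_of (G \<inter> H)"
    by (auto simp: dense_in_def closure_of_subtopology H_def Int_absorb1 Int_commute)
  then obtain U where U: "openin (K_topology S) U" "z \<in> U" "U \<inter> (G \<inter> H) = {}"
    using \<open>H \<subseteq> topspace (K_topology S)\<close> by (auto simp: in_closure_of)
  obtain r where "r > 0" and r: "\<And>v. \<forall>j. \<bar>v j - z j\<bar> < r \<Longrightarrow> K_quot S v \<in> U"
    using openin_K_topology_cube[OF U(1,2)] by blast
  have "K_quot S v \<notin> G" if "v i = 0" "\<forall>j. \<bar>v j - z j\<bar> < r" for v
  proof -
    have "K_quot S v \<in> H"
      using K_quot_in_topspace[of S v] that(1)
      by (simp add: H_def K_hyperplane_def K_quot_def factor_quot_def)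
    with r[OF that(2)] U(3) show ?thesis by blast
  qed
  with \<open>r > 0\<close> z(1) show ?thesis
    unfolding hyperplane_gap_def by (auto simp: H_def K_hyperplane_def)
qed

lemma hyperplane_gap_face:
  assumes "K_subgroup S G" "hyperplane_gap S G i z r"
    and "K_quot S s \<in> G" "\<And>j. j \<noteq> i \<Longrightarrow> \<bar>s j - (x j - z j)\<bar> < r / 2"
    and "K_quot S t \<in> G" "\<And>j. \<bar>t j - x j\<bar> < r / 2"
  shows "t i \<noteq> s i"
proof
  assume "t i = s i"
  have "K_quot S (t - s) \<in> G"
    using assms(1,3,5) K_add_K_quot_K_neg[of S t s] unfolding K_subgroup_def by metis
  moreover have "\<bar>(t - s) j - z j\<bar> < r" for j
  proof (cases "j = i")
    case True
    with \<open>t i = s i\<close> assms(2) show ?thesis by (simp add: hyperplane_gap_def)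
  next
    case False
    with assms(4,6)[of j] show ?thesis unfolding abs_less_iff by auto
  qed
  ultimately show False
    using assms(2) \<open>t i = s i\<close> by (simp add: hyperplane_gap_def)
qed

lemma exists_K_box_boundary_avoids:
  assumes "K_subgroup S G" "dense_in (K_topology S) G"
    and gaps: "\<And>i. hyperplane_gap S G i (z i) (r i)"
    and "d > 0" "\<And>i. d \<le> r i / 2"
  shows "\<exists>a b. (\<forall>j. x j - d < a j \<and> a j < x j \<and> x j < b j \<and> b j < x j + d)
           \<and> K_cbox S a b \<inter> G \<subseteq> K_box S a b"
proof -
  have r: "r i / 2 > 0" for i using gaps[of i] by (simp add: hyperplane_gap_def)
  have "\<exists>s. K_quot S s \<in> G \<and> x i - d < s i \<and> s i < x i
          \<and> (\<forall>j. j \<noteq> i \<longrightarrow> \<bar>s j - (x j - z i j)\<bar> < r i / 2)" for i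
    using dense_in_K_topology_near[OF assms(2) _ r] assms(4) by simp
  then obtain sa where sa: "\<And>i. K_quot S (sa i) \<in> G" "\<And>i. x i - d < sa i i" "\<And>i. sa i i < x i"
      "\<And>i j. j \<noteq> i \<Longrightarrow> \<bar>sa i j - (x j - z i j)\<bar> < r i / 2"
    by metis
  have "\<exists>s. K_quot S s \<in> G \<and> x i < s i \<and> s i < x i + d
          \<and> (\<forall>j. j \<noteq> i \<longrightarrow> \<bar>s j - (x j - z i j)\<bar> < r i / 2)" for i
    using dense_in_K_topology_near[OF assms(2) _ r] assms(4) by simp
  then obtain sb where sb: "\<And>i. K_quot S (sb i) \<in> G" "\<And>i. x i < sb i i" "\<And>i. sb i i < x i + d"
      "\<And>i j. j \<noteq> i \<Longrightarrow> \<bar>sb i j - (x j - z i j)\<bar> < r i / 2"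
    by metis
  define a where "a = (\<lambda>i. sa i i)"
  define b where "b = (\<lambda>i. sb i i)"
  have bounds: "x j - d < a j \<and> a j < x j \<and> x j < b j \<and> b j < x j + d" for j
    using sa(2,3) sb(2,3) by (simp add: a_def b_def)
  have box: "K_cbox S a b \<inter> G \<subseteq> K_box S a b"
  proof
    fix y assume "y \<in> K_cbox S a b \<inter> G"
    then obtain t where t: "\<And>j. a j \<le> t j \<and> t j \<le> b j" and "K_quot S t \<in> G" "y = K_quot S t"
      unfolding K_cbox_eq_image by blast
    have near: "\<bar>t j - x j\<bar> < r i / 2" for i j
      using t[of j] sa(2,3)[of j] sb(2,3)[of j] assms(5)[of i]
      unfolding a_def b_def abs_less_iff by linarith
    have "t i \<noteq> a i" "t i \<noteq> b i" for i
      using hyperplane_gap_face[OF assms(1) gaps[of i] sa(1)[of i] sa(4)[where i=i]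
          \<open>K_quot S t \<in> G\<close> near[where i=i]]
        hyperplane_gap_face[OF assms(1) gaps[of i] sb(1)[of i] sb(4)[where i=i]
          \<open>K_quot S t \<in> G\<close> near[where i=i]]
      by (simp_all add: a_def b_def)
    with t have "a j < t j \<and> t j < b j" for j by (metis order_le_less)
    with \<open>y = K_quot S t\<close> show "y \<in> K_box S a b"
      unfolding K_box_eq_image by blast
  qed
  show ?thesis
    by (rule exI[of _ a], rule exI[of _ b]) (use bounds box in blast)
qed

lemma hyperplane_gaps_imp_zero_dimensional:
  fixes S :: "('n::finite) set"
  assumes "K_subgroup S G" "dense_in (K_topology S) G"
    and gaps: "\<And>i. hyperplane_gap S G i (z i) (r i)"
  shows "zero_dimensional (subtopology (K_topology S) G)"
  unfolding zero_dimensional_def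
proof (intro allI impI, elim conjE)
  fix U x assume "openin (subtopology (K_topology S) G) U" "x \<in> U"
  then obtain W where W: "openin (K_topology S) W" "U = W \<inter> G" "x \<in> W" "x \<in> G"
    by (auto simp: openin_subtopology)
  obtain \<rho> where "\<rho> > 0" and \<rho>: "\<And>v. \<forall>j. \<bar>v j - x j\<bar> < \<rho> \<Longrightarrow> K_quot S v \<in> W"
    using openin_K_topology_cube[OF W(1,3)] by blast
  define r0 where "r0 = Min (range r)"
  define d where "d = min \<rho> (min (r0 / 2) (1 / 2))"
  have "d > 0"
    using \<open>\<rho> > 0\<close> gaps by (simp add: d_def r0_def hyperplane_gap_def)
  moreover have "d \<le> r i / 2" for i
  proof -
    have "d \<le> r0 / 2" by (simp add: d_def)
    moreover have "r0 \<le> r i" by (simp add: r0_def)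
    ultimately show ?thesis by linarith
  qed
  ultimately obtain a b where ab: "\<And>j. x j - d < a j \<and> a j < x j \<and> x j < b j \<and> b j < x j + d"
    and box: "K_cbox S a b \<inter> G \<subseteq> K_box S a b"
    using exists_K_box_boundary_avoids[OF assms] by metis
  have "d \<le> 1 / 2" by (simp add: d_def)
  then have "a j \<le> b j \<and> b j - a j < 1" for j
    using ab[of j] by linarith
  then have "closedin (K_topology S) (K_cbox S a b)"
    by (rule closedin_K_cbox)
  then have clopen: "openin (subtopology (K_topology S) G) (K_box S a b \<inter> G)"
    "closedin (subtopology (K_topology S) G) (K_box S a b \<inter> G)"
    using clopen_in_subtopology_Int[OF openin_K_box _ K_box_subset_K_cbox box] by auto
  have "K_quot S x = x"
    using W(4) assms(1) by (intro K_quot_eq_self) (auto simp: K_subgroup_def)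
  then have "x \<in> K_box S a b"
    unfolding K_box_eq_image using ab by (auto intro: image_eqI[where x=x])
  moreover have "K_box S a b \<subseteq> W"
  proof
    fix y assume "y \<in> K_box S a b"
    then obtain t where t: "\<And>j. a j < t j \<and> t j < b j" and "y = K_quot S t"
      unfolding K_box_eq_image by blast
    have "d \<le> \<rho>" by (simp add: d_def)
    then have "\<bar>t j - x j\<bar> < \<rho>" for j
      using t[of j] ab[of j] unfolding abs_less_iff by linarith
    with \<rho> \<open>y = K_quot S t\<close> show "y \<in> W" by blast
  qed
  ultimately show "\<exists>V. openin (subtopology (K_topology S) G) V \<and>
      closedin (subtopology (K_topology S) G) V \<and> x \<in> V \<and> V \<subseteq> U"
    using clopen W(2,4) by blast
qed

theorem theorem4p1:
  fixes S :: "('n::finite) set" and G :: "('n \<Rightarrow> real) set"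
  assumes "CARD('n) \<ge> 2"
    and "K_subgroup S G"
    and "dense_in (K_topology S) G"
    and "\<forall>i. \<not> dense_in (subtopology (K_topology S) (K_hyperplane S i)) (G \<inter> K_hyperplane S i)"
  shows "zero_dimensional (subtopology (K_topology S) G)"
proof -
  obtain z r where "\<And>i. hyperplane_gap S G i (z i) (r i)"
    using not_dense_hyperplane_gap assms(4) by metis
  with assms(2,3) show ?thesis
    by (rule hyperplane_gaps_imp_zero_dimensional)
qed

end
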